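(* There is a choice of the sample size $\ell=O(\log n)$ such that, for any weighted stream of $n$ updates, the Reduce-By-Sample-Median algorithm (defined in the context) with $k$ counters and sample size $\ell$ can be implemented to run in amortized constant time per stream update with probability at least $1-1/n$ (over the algorithm's random sampling), assuming counters are stored in a hash table supporting insertions, deletions and lookups in amortized $O(1)$ time and enumeration of all counters in $O(k)$ time.
   Context: A weighted stream over the universe $[m]=\{1,\dots,m\}$ is a sequence of updates $(i_1,\Delta_1),\dots,(i_n,\Delta_n)$ with $i_t\in[m]$ and real weights $\Delta_t>0$. The Reduce-By-Sample-Median algorithm with parameters $k\ge 1$ (number of counters) and $\ell\ge 1$ (sample size) maintains a set $T\subseteq[m]$ of at most $k$ items, each $j\in T$ carrying a nonnegative real counter $c(j)$; initially $T=\emptyset$. Update$(i,\Delta)$: if $i\in T$, set $c(i)\gets c(i)+\Delta$; else if $|T|<k$, add $i$ to $T$ with $c(i)=\Delta$; else call DecrementCounters(), and afterwards, if $\Delta\ge c^*$, add $i$ to $T$ with $c(i)=\Delta-c^*$. DecrementCounters(): sample $\ell$ counters uniformly at random from $T$ (fresh randomness in each call) and let $c^*$ be the median of the sampled counter values; for every $j\in T$ set $c(j)\gets c(j)-c^*$, and remove $j$ from $T$ if now $c(j)\le 0$. Estimate$(i)$ returns $c(i)$ if $i\in T$ and $0$ otherwise. *)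

theory Defs
  imports "HOL-Probability.Probability"
begin

text \<open>State of Reduce-By-Sample-Median: the set T of tracked items and the counters c.
  Counter values outside T are irrelevant.\<close>
type_synonym rbsm_state = "nat set \<times> (nat \<Rightarrow> real)"

text \<open>Median of a (nonempty) list of sampled values: the element of rank
  (length div 2) (0-indexed) of the sorted list; the true median when the length is odd.\<close>
definition median :: "real list \<Rightarrow> real" where
  "median xs = sort xs ! (length xs div 2)"

fun sample_list :: "nat \<Rightarrow> 'a set \<Rightarrow> 'a list pmf" where
  "sample_list 0 A = return_pmf []"
| "sample_list (Suc n) A =
     bind_pmf (pmf_of_set A) (\<lambda>x. map_pmf (\<lambda>xs. x # xs) (sample_list n A))"

definition decrement :: "nat \<Rightarrow> rbsm_state \<Rightarrow> (rbsm_state \<times> real) pmf" where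
  "decrement l s = (case s of (T, c) \<Rightarrow>
     map_pmf (\<lambda>js. let cs = median (map c js)
                   in (({j \<in> T. c j - cs > 0}, (\<lambda>j. c j - cs)), cs))
             (sample_list l T))"

text \<open>Update(i,Delta) with k counters and sample size l; returns the new state together
  with the cost of the step in the stated cost model: hash-table operations cost 1,
  a call to DecrementCounters costs |T| (enumerating all counters) plus l
  (drawing the sample and selecting its median).\<close>
definition update :: "nat \<Rightarrow> nat \<Rightarrow> nat \<times> real \<Rightarrow> rbsm_state \<Rightarrow> (rbsm_state \<times> nat) pmf" where
  "update k l u s = (case u of (i, \<Delta>) \<Rightarrow> case s of (T, c) \<Rightarrow>
     if i \<in> T then return_pmf ((T, c(i := c i + \<Delta>)), 1)
     else if card T < k then return_pmf ((insert i T, c(i := \<Delta>)), 1)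
     else map_pmf (\<lambda>((T', c'), cs).
              (if \<Delta> \<ge> cs then (insert i T', c'(i := \<Delta> - cs)) else (T', c'),
               1 + card T + l))
            (decrement l (T, c)))"

fun run :: "nat \<Rightarrow> nat \<Rightarrow> (nat \<times> real) list \<Rightarrow> rbsm_state \<Rightarrow> (rbsm_state \<times> nat) pmf" where
  "run k l [] s = return_pmf (s, 0)"
| "run k l (u # us) s =
     bind_pmf (update k l u s) (\<lambda>(s1, c1).
       map_pmf (\<lambda>(s2, c2). (s2, c1 + c2)) (run k l us s1))"

definition total_cost :: "nat \<Rightarrow> nat \<Rightarrow> (nat \<times> real) list \<Rightarrow> nat pmf" where
  "total_cost k l xs = map_pmf snd (run k l xs ({}, (\<lambda>_. 0)))"

end

theory Submission
  imports Defs
begin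

text \<open>Charge every update its cost plus \<open>8 |T|\<close>. A decrement costs \<open>|T| + l = k + l\<close> and frees
  every counter whose value is at most the sample median. Unless that median has rank below
  \<open>k/4\<close> in \<open>T\<close> -- which needs more than half of the \<open>l\<close> samples to fall among the lowest quarter
  of the counters, an event of probability at most \<open>(7/8)^l\<close> -- at least \<open>k/4\<close> counters are
  freed and the potential pays for the decrement. Hence \<open>exp (\<lambda> (cost + 8 |T|))\<close> grows in
  expectation by at most \<open>exp (73 \<lambda>)\<close> per update for \<open>\<lambda> = l / (64 k)\<close>, and Markov's inequality
  for \<open>exp (\<lambda> cost)\<close> bounds the total cost by \<open>137 n\<close> except with probability
  \<open>exp (-64 \<lambda> n) \<le> 1/n\<close> once \<open>l \<approx> 15 ln n\<close>.\<close>

lemma expectation_mono_finite_pmf: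
  fixes f g :: "'a \<Rightarrow> real"
  assumes "finite (set_pmf p)" "\<And>x. x \<in> set_pmf p \<Longrightarrow> f x \<le> g x"
  shows "measure_pmf.expectation p f \<le> measure_pmf.expectation p g"
  using assms by (intro integral_mono_AE integrable_measure_pmf_finite) (auto simp: AE_measure_pmf_iff)

lemma expectation_bind_pmf_le:
  fixes h :: "'b \<Rightarrow> real" and g :: "'a \<Rightarrow> real"
  assumes fin: "finite (set_pmf p)" and fin_f: "\<And>x. x \<in> set_pmf p \<Longrightarrow> finite (set_pmf (f x))"
    and le: "\<And>x. x \<in> set_pmf p \<Longrightarrow> measure_pmf.expectation (f x) h \<le> g x"
  shows "measure_pmf.expectation (bind_pmf p f) h \<le> measure_pmf.expectation p g"
proof -
  have "measure_pmf.expectation (bind_pmf p f) h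
      = (\<Sum>x\<in>set_pmf p. pmf p x *\<^sub>R measure_pmf.expectation (f x) h)"
    using fin fin_f by (intro pmf_expectation_bind) auto
  also have "\<dots> \<le> (\<Sum>x\<in>set_pmf p. pmf p x *\<^sub>R g x)"
    using le by (intro sum_mono) (auto intro: mult_left_mono)
  also have "\<dots> = measure_pmf.expectation p g"
    using fin by (subst integral_measure_pmf[of "set_pmf p"]) auto
  finally show ?thesis .
qed

lemma finite_pmf_Markov_inequality:
  fixes u :: "'a \<Rightarrow> real"
  assumes fin: "finite (set_pmf p)" and nonneg: "\<And>x. x \<in> set_pmf p \<Longrightarrow> 0 \<le> u x"
    and above: "\<And>x. x \<in> set_pmf p \<Longrightarrow> x \<in> A \<Longrightarrow> t \<le> u x" and t: "0 < t"
  shows "measure_pmf.prob p A \<le> measure_pmf.expectation p u / t"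
proof -
  have "measure_pmf.prob p A = measure_pmf.prob p (A \<inter> set_pmf p)"
    by (simp add: measure_Int_set_pmf)
  also have "\<dots> \<le> measure_pmf.prob p {x \<in> space (measure_pmf p). t \<le> u x}"
    using above by (intro measure_pmf.finite_measure_mono) auto
  also have "\<dots> \<le> measure_pmf.expectation p u / t"
    using nonneg t
    by (intro integral_Markov_inequality_measure[where A=UNIV] integrable_measure_pmf_finite fin)
      (auto simp: AE_measure_pmf_iff)
  finally show ?thesis .
qed

subsection \<open>Uniform samples\<close>

lemma set_pmf_sample_list_subset:
  assumes "finite T" "T \<noteq> {}"
  shows "set_pmf (sample_list l T) \<subseteq> {js. set js \<subseteq> T \<and> length js = l}"
  using assms by (induction l) force+

lemma finite_set_pmf_sample_list:
  assumes "finite T" "T \<noteq> {}"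
  shows "finite (set_pmf (sample_list l T))"
  using set_pmf_sample_list_subset[OF assms] finite_lists_length_eq[OF assms(1)]
  by (rule finite_subset)

lemma expectation_power_count_sample_list:
  fixes b :: real
  assumes fin: "finite T" and ne: "T \<noteq> {}" and LT: "L \<subseteq> T"
  shows "measure_pmf.expectation (sample_list l T) (\<lambda>js. b ^ length (filter (\<lambda>j. j \<in> L) js))
         = (1 + (b - 1) * real (card L) / real (card T)) ^ l"
proof (induction l)
  case 0
  then show ?case by simp
next
  case (Suc l)
  let ?h = "\<lambda>js. b ^ length (filter (\<lambda>j. j \<in> L) js)"
  let ?X = "measure_pmf.expectation (sample_list l T) ?h"
  have weights: "(\<Sum>j\<in>T. if j \<in> L then b else 1) = real (card T) + (b - 1) * real (card L)"
  proof -
    have "(\<Sum>j\<in>T. if j \<in> L then b else 1) = (\<Sum>j\<in>T. 1 + (b - 1) * (if j \<in> L then 1 else 0))"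
      by (intro sum.cong) auto
    also have "\<dots> = real (card T) + (b - 1) * (\<Sum>j\<in>T. if j \<in> L then 1 else 0)"
      by (simp add: sum.distrib sum_distrib_left)
    also have "(\<Sum>j\<in>T. if j \<in> L then 1 else 0) = real (card L)"
      using fin LT by (simp add: sum.If_cases Int_absorb1)
    finally show ?thesis .
  qed
  have "measure_pmf.expectation (sample_list (Suc l) T) ?h =
     (\<Sum>j\<in>T. pmf (pmf_of_set T) j *\<^sub>R
        measure_pmf.expectation (map_pmf (\<lambda>js. j # js) (sample_list l T)) ?h)"
    using fin ne
    by (simp only: sample_list.simps, intro pmf_expectation_bind)
      (auto simp: finite_set_pmf_sample_list)
  also have "\<dots> = (\<Sum>j\<in>T. ((if j \<in> L then b else 1) * ?X) / real (card T))"
    using fin ne by (intro sum.cong refl) simp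
  also have "\<dots> = ?X * (1 + (b - 1) * real (card L) / real (card T))"
    using fin ne by (simp add: weights flip: sum_divide_distrib sum_distrib_right)
      (simp add: field_simps)
  finally show ?case using Suc by simp
qed

subsection \<open>Rank of the sample median\<close>

lemma sorted_count_le_nth:
  fixes ys :: "real list"
  assumes "sorted ys" "i < length ys"
  shows "Suc i \<le> length (filter (\<lambda>x. x \<le> ys ! i) ys)"
proof -
  have "\<forall>x\<in>set (take (Suc i) ys). x \<le> ys ! i"
    using assms by (auto simp: in_set_conv_nth sorted_nth_mono)
  then have "filter (\<lambda>x. x \<le> ys ! i) (take (Suc i) ys) = take (Suc i) ys"
    by (simp add: filter_id_conv)
  then have "length (filter (\<lambda>x. x \<le> ys ! i) (take (Suc i) ys)) = Suc i"
    using assms by simp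
  moreover have "length (filter (\<lambda>x. x \<le> ys ! i) (take (Suc i) ys))
      \<le> length (filter (\<lambda>x. x \<le> ys ! i) ys)"
    by (metis append_take_drop_id filter_append length_append le_add1)
  ultimately show ?thesis by simp
qed

lemma count_le_median:
  fixes xs :: "real list"
  assumes "xs \<noteq> []"
  shows "Suc (length xs div 2) \<le> length (filter (\<lambda>x. x \<le> median xs) xs)"
proof -
  have "Suc (length xs div 2) \<le> length (filter (\<lambda>x. x \<le> median xs) (sort xs))"
    unfolding median_def using assms by (intro sorted_count_le_nth) auto
  also have "\<dots> = length (filter (\<lambda>x. x \<le> median xs) xs)"
    by (metis mset_filter mset_sort size_mset)
  finally show ?thesis .
qed

lemma length_filter_mono:
  "(\<And>x. x \<in> set xs \<Longrightarrow> P x \<Longrightarrow> Q x) \<Longrightarrow> length (filter P xs) \<le> length (filter Q xs)"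
  by (induction xs) auto

lemma median_in_set: "xs \<noteq> [] \<Longrightarrow> median xs \<in> set xs"
  unfolding median_def by (metis length_greater_0_conv length_sort div_less_dividend nth_mem
    one_less_numeral_iff semiring_norm(76) set_sort)

definition low_rank :: "(nat \<Rightarrow> real) \<Rightarrow> nat set \<Rightarrow> nat set" where
  "low_rank c T = {j \<in> T. 4 * card {i \<in> T. c i \<le> c j} < card T}"

lemma card_low_rank:
  assumes fin: "finite T"
  shows "4 * card (low_rank c T) \<le> card T"
proof (cases "low_rank c T = {}")
  case False
  have "low_rank c T \<subseteq> T" by (auto simp: low_rank_def)
  then have fin_low: "finite (low_rank c T)" using fin by (rule finite_subset)
  have "Max (c ` low_rank c T) \<in> c ` low_rank c T"
    using False fin_low by (intro Max_in) auto
  then obtain j where j: "j \<in> low_rank c T" "c j = Max (c ` low_rank c T)" by auto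
  have "low_rank c T \<subseteq> {i \<in> T. c i \<le> c j}"
  proof
    fix i assume i: "i \<in> low_rank c T"
    then have "c i \<le> c j" using j(2) fin_low by (metis Max_ge finite_imageI imageI)
    moreover have "i \<in> T" using i by (simp add: low_rank_def)
    ultimately show "i \<in> {i \<in> T. c i \<le> c j}" by simp
  qed
  then have "card (low_rank c T) \<le> card {i \<in> T. c i \<le> c j}"
    using fin by (intro card_mono) auto
  moreover have "4 * card {i \<in> T. c i \<le> c j} < card T"
    using j(1) unfolding low_rank_def by auto
  ultimately show ?thesis by linarith
qed simp

text \<open>If the sample median has rank below \<open>|T|/4\<close>, so has every sample not exceeding it, and
  these are more than half of the samples.\<close>

lemma count_low_rank_if_median_low:
  fixes c :: "nat \<Rightarrow> real"
  assumes fin: "finite T" and ne: "T \<noteq> {}" and l: "1 \<le> l"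
    and js: "js \<in> set_pmf (sample_list l T)"
    and low: "4 * card {j \<in> T. c j \<le> median (map c js)} < card T"
  shows "Suc (l div 2) \<le> length (filter (\<lambda>j. j \<in> low_rank c T) js)"
proof -
  let ?cs = "median (map c js)"
  have len: "length js = l" and sub: "set js \<subseteq> T"
    using set_pmf_sample_list_subset[OF fin ne] js by auto
  have "Suc (l div 2) \<le> length (filter (\<lambda>x. x \<le> ?cs) (map c js))"
    using count_le_median[of "map c js"] len l by (cases js) auto
  also have "\<dots> = length (filter (\<lambda>j. c j \<le> ?cs) js)"
    by (simp add: filter_map comp_def)
  also have "\<dots> \<le> length (filter (\<lambda>j. j \<in> low_rank c T) js)"
  proof (intro length_filter_mono)
    fix j assume "j \<in> set js" "c j \<le> ?cs"
    then have "{i \<in> T. c i \<le> c j} \<subseteq> {i \<in> T. c i \<le> ?cs}" by auto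
    then have "card {i \<in> T. c i \<le> c j} \<le> card {i \<in> T. c i \<le> ?cs}"
      using fin by (intro card_mono) auto
    then show "j \<in> low_rank c T"
      using \<open>j \<in> set js\<close> sub low unfolding low_rank_def by auto
  qed
  finally show ?thesis .
qed

lemma prob_median_rank_below_quarter:
  fixes c :: "nat \<Rightarrow> real"
  assumes fin: "finite T" and ne: "T \<noteq> {}" and l: "1 \<le> l"
  shows "measure_pmf.prob (sample_list l T)
           {js. 4 * card {j \<in> T. c j \<le> median (map c js)} < card T} \<le> (7/8) ^ l"
proof -
  let ?count = "\<lambda>js. length (filter (\<lambda>j. j \<in> low_rank c T) js)"
  have "measure_pmf.prob (sample_list l T) {js. 4 * card {j \<in> T. c j \<le> median (map c js)} < card T}
      \<le> measure_pmf.expectation (sample_list l T) (\<lambda>js. (4::real) ^ ?count js) / 4 ^ Suc (l div 2)"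
    using count_low_rank_if_median_low[OF fin ne l]
    by (intro finite_pmf_Markov_inequality finite_set_pmf_sample_list fin ne power_increasing) auto
  also have "measure_pmf.expectation (sample_list l T) (\<lambda>js. (4::real) ^ ?count js)
      = (1 + 3 * real (card (low_rank c T)) / real (card T)) ^ l"
    using expectation_power_count_sample_list[OF fin ne, where L = "low_rank c T" and b = 4 and l = l]
    by (simp add: low_rank_def)
  also have "\<dots> \<le> (7/4) ^ l"
  proof (rule power_mono)
    have "real (card (low_rank c T)) / real (card T) \<le> 1/4"
      using card_low_rank[OF fin, of c] fin ne by (simp add: field_simps card_gt_0_iff)
    then show "1 + 3 * real (card (low_rank c T)) / real (card T) \<le> 7/4" by simp
  qed simp
  also have "(7/4) ^ l / 4 ^ Suc (l div 2) \<le> ((7/4::real) ^ l) / 2 ^ l"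
  proof (intro divide_left_mono)
    have "(2::real) ^ l \<le> 2 ^ (2 * Suc (l div 2))" by (intro power_increasing) auto
    then show "(2::real) ^ l \<le> 4 ^ Suc (l div 2)" by (simp add: power_mult)
  qed auto
  also have "\<dots> = (7/8) ^ l" by (simp flip: power_divide)
  finally show ?thesis by (simp add: divide_right_mono)
qed

subsection \<open>One update\<close>

lemma update_full:
  assumes "i \<notin> T" "\<not> card T < k"
  shows "update k l (i, \<Delta>) (T, c) =
    map_pmf (\<lambda>js. let cs = median (map c js); T' = {j \<in> T. cs < c j}
      in (if cs \<le> \<Delta> then (insert i T', (\<lambda>j. c j - cs)(i := \<Delta> - cs)) else (T', (\<lambda>j. c j - cs)),
          1 + card T + l))
      (sample_list l T)"
  using assms unfolding update_def decrement_def by (simp add: map_pmf_comp Let_def)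

lemma finite_set_pmf_update:
  assumes fin: "finite T" and card: "card T \<le> k" and k: "1 \<le> k"
  shows "finite (set_pmf (update k l (i, \<Delta>) (T, c)))"
proof (cases "i \<in> T \<or> card T < k")
  case True
  then show ?thesis unfolding update_def by auto
next
  case False
  then have "T \<noteq> {}" using card k by auto
  then show ?thesis
    using False fin by (simp add: update_full finite_set_pmf_sample_list)
qed

lemma card_update_le:
  assumes fin: "finite T" and card: "card T \<le> k" and k: "1 \<le> k" and l: "1 \<le> l"
    and mem: "((T1, c1), t) \<in> set_pmf (update k l (i, \<Delta>) (T, c))"
  shows "finite T1 \<and> card T1 \<le> k \<and> card T1 \<le> card T + 1"
proof (cases "i \<in> T \<or> card T < k")
  case True
  then show ?thesis
    using fin card mem by (auto simp: update_def card_insert_if split: if_splits)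
next
  case False
  then have full: "i \<notin> T" "card T = k" using card by auto
  then have ne: "T \<noteq> {}" using k by auto
  obtain js where js: "js \<in> set_pmf (sample_list l T)"
    and T1: "T1 = insert i {j \<in> T. median (map c js) < c j} \<or> T1 = {j \<in> T. median (map c js) < c j}"
    using mem full by (auto simp: update_full Let_def split: if_splits)
  let ?S = "{j \<in> T. median (map c js) < c j}"
  have "length js = l" "set js \<subseteq> T"
    using set_pmf_sample_list_subset[OF fin ne] js by auto
  moreover have "median (map c js) \<in> set (map c js)"
    using l \<open>length js = l\<close> by (intro median_in_set) auto
  ultimately obtain j0 where "j0 \<in> T" "c j0 = median (map c js)" by auto
  then have "?S \<subseteq> T - {j0}" by auto
  then have "card ?S \<le> k - 1"
    using fin full \<open>j0 \<in> T\<close> by (metis card_Diff_singleton card_mono finite_Diff)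
  moreover have "card T1 \<le> card ?S + 1"
    using T1 fin by (auto simp: card_insert_if)
  ultimately show ?thesis using k full fin T1 by auto
qed

text \<open>A median of rank at least \<open>k/4\<close> frees enough counters to pay for the \<open>k + l \<le> 2 k\<close>
  steps of the decrement.\<close>

lemma potential_after_decrement:
  fixes c :: "nat \<Rightarrow> real" and cs \<Delta> :: real
  assumes fin: "finite T" and full: "card T = k" and lk: "l \<le> k"
  shows "real (1 + card T + l)
           + 8 * real (card (if cs \<le> \<Delta> then insert i {j \<in> T. cs < c j} else {j \<in> T. cs < c j}))
         \<le> 9 + 8 * real k + (if 4 * card {j \<in> T. c j \<le> cs} < k then real k + real l else 0)"
proof -
  let ?S = "{j \<in> T. cs < c j}" and ?R = "{j \<in> T. c j \<le> cs}"
  have "?S \<union> ?R = T" "?S \<inter> ?R = {}" by auto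
  then have "card ?S + card ?R = k"
    using fin full by (metis card_Un_disjoint finite_Un)
  moreover have "card (if cs \<le> \<Delta> then insert i ?S else ?S) \<le> card ?S + 1"
    using fin by (auto simp: card_insert_if)
  ultimately show ?thesis using full lk by auto
qed

lemma expectation_exp_potential_decrement:
  fixes c :: "nat \<Rightarrow> real" and lam \<Delta> :: real
  assumes fin: "finite T" and full: "card T = k" and l: "1 \<le> l" and lk: "l \<le> k"
    and lam: "0 \<le> lam"
  shows "measure_pmf.expectation (sample_list l T) (\<lambda>js. exp (lam * (real (1 + card T + l)
            + 8 * real (card (if median (map c js) \<le> \<Delta>
                              then insert i {j \<in> T. median (map c js) < c j}
                              else {j \<in> T. median (map c js) < c j})))))
         \<le> exp (lam * 8 * real k) * (exp (lam * 9) + (7/8) ^ l * exp (lam * (9 + real k + real l)))"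
    (is "measure_pmf.expectation _ (\<lambda>js. exp (lam * ?P js)) \<le> _")
proof -
  have ne: "T \<noteq> {}" using full l lk by auto
  define low where "low = {js. 4 * card {j \<in> T. c j \<le> median (map c js)} < card T}"
  define B where "B = (\<lambda>js. exp (lam * 8 * real k) *
    (exp (lam * 9) + indicator low js * exp (lam * (9 + real k + real l))))"
  have "measure_pmf.expectation (sample_list l T) (\<lambda>js. exp (lam * ?P js))
      \<le> measure_pmf.expectation (sample_list l T) B"
  proof (intro expectation_mono_finite_pmf finite_set_pmf_sample_list fin ne)
    fix js
    have "?P js \<le> 9 + 8 * real k + (if js \<in> low then real k + real l else 0)"
      using potential_after_decrement[OF fin full lk] full unfolding low_def by simp
    then have "exp (lam * ?P js)
        \<le> exp (lam * (9 + 8 * real k + (if js \<in> low then real k + real l else 0)))"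
      using lam by (simp add: mult_left_mono)
    also have "\<dots> \<le> B js"
      unfolding B_def by (cases "js \<in> low") (simp_all add: algebra_simps flip: exp_add)
    finally show "exp (lam * ?P js) \<le> B js" .
  qed
  also have "\<dots> = exp (lam * 8 * real k) * (exp (lam * 9)
      + measure_pmf.prob (sample_list l T) low * exp (lam * (9 + real k + real l)))"
    unfolding B_def using finite_set_pmf_sample_list[OF fin ne]
    by (simp add: integrable_measure_pmf_finite)
  also have "\<dots> \<le> exp (lam * 8 * real k)
      * (exp (lam * 9) + (7/8) ^ l * exp (lam * (9 + real k + real l)))"
    using prob_median_rank_below_quarter[OF fin ne l, of c] unfolding low_def
    by (auto intro!: mult_left_mono mult_right_mono)
  finally show ?thesis .
qed

text \<open>In a decrement, \<open>exp (\<lambda> (cost + 8 |T|))\<close> grows by the factor \<open>exp (9 \<lambda>)\<close> when the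
  median has rank at least \<open>k/4\<close>, and by \<open>exp (\<lambda> (9 + k + l))\<close> on an event of probability at
  most \<open>(7/8)^l\<close>; an admissible rate bounds this expected growth by \<open>exp (\<lambda> a)\<close>.\<close>

definition admissible_rate :: "real \<Rightarrow> nat \<Rightarrow> nat \<Rightarrow> real \<Rightarrow> bool" where
  "admissible_rate lam k l a \<longleftrightarrow>
     exp (lam * 9) + (7/8) ^ l * exp (lam * (9 + real k + real l)) \<le> exp (lam * a)"

lemma expectation_exp_potential_update:
  fixes c :: "nat \<Rightarrow> real" and lam a :: real
  assumes fin: "finite T" and card: "card T \<le> k" and l: "1 \<le> l" and lk: "l \<le> k"
    and lam: "0 \<le> lam" and a: "9 \<le> a" and rate: "card T = k \<Longrightarrow> admissible_rate lam k l a"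
  shows "measure_pmf.expectation (update k l (i, \<Delta>) (T, c))
           (\<lambda>((T1, c1), t). exp (lam * (real t + 8 * real (card T1))))
         \<le> exp (lam * (a + 8 * real (card T)))"
proof (cases "i \<in> T \<or> card T < k")
  case True
  then show ?thesis
    using lam a fin unfolding update_def by (auto simp: mult_left_mono)
next
  case False
  then have full: "i \<notin> T" "card T = k" using card by auto
  let ?cs = "\<lambda>js. median (map c js)"
  have "measure_pmf.expectation (update k l (i, \<Delta>) (T, c))
         (\<lambda>((T1, c1), t). exp (lam * (real t + 8 * real (card T1))))
      = measure_pmf.expectation (sample_list l T) (\<lambda>js. exp (lam * (real (1 + card T + l)
          + 8 * real (card (if ?cs js \<le> \<Delta> then insert i {j \<in> T. ?cs js < c j}
                              else {j \<in> T. ?cs js < c j})))))"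
    using full by (simp add: update_full Let_def, intro Bochner_Integration.integral_cong refl)
      (auto simp: algebra_simps)
  also have "\<dots> \<le> exp (lam * 8 * real k)
      * (exp (lam * 9) + (7/8) ^ l * exp (lam * (9 + real k + real l)))"
    by (rule expectation_exp_potential_decrement[OF fin full(2) l lk lam])
  also have "\<dots> \<le> exp (lam * 8 * real k) * exp (lam * a)"
    using rate[OF full(2)] unfolding admissible_rate_def by (intro mult_left_mono) auto
  also have "\<dots> = exp (lam * (a + 8 * real (card T)))"
    using full by (simp add: algebra_simps flip: exp_add)
  finally show ?thesis .
qed

subsection \<open>The whole stream\<close>

lemma finite_set_pmf_run:
  assumes k: "1 \<le> k" and l: "1 \<le> l"
  shows "finite T \<Longrightarrow> card T \<le> k \<Longrightarrow> finite (set_pmf (run k l xs (T, c)))"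
proof (induction xs arbitrary: T c)
  case Nil
  then show ?case by simp
next
  case (Cons u us)
  obtain i \<Delta> where u: "u = (i, \<Delta>)" by fastforce
  have "finite (set_pmf (run k l us (T1, c1)))"
    if "((T1, c1), t) \<in> set_pmf (update k l (i, \<Delta>) (T, c))" for T1 c1 t
    using card_update_le[OF Cons.prems k l that] by (intro Cons.IH) auto
  then show ?case
    using finite_set_pmf_update[OF Cons.prems k] by (auto simp: u)
qed

text \<open>The rate only has to be admissible once the table can be full, i.e. when the stream has
  at least \<open>k\<close> updates; \<open>N\<close> bounds the number of counters plus remaining updates.\<close>

lemma expectation_exp_run_cost:
  fixes lam a :: real
  assumes k: "1 \<le> k" and l: "1 \<le> l" and lk: "l \<le> k" and lam: "0 \<le> lam" and a: "9 \<le> a"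
    and rate: "k \<le> N \<Longrightarrow> admissible_rate lam k l a"
  shows "finite T \<Longrightarrow> card T \<le> k \<Longrightarrow> card T + length xs \<le> N \<Longrightarrow>
    measure_pmf.expectation (run k l xs (T, c)) (\<lambda>(s, t). exp (lam * real t))
      \<le> exp (lam * (a * real (length xs) + 8 * real (card T)))"
proof (induction xs arbitrary: T c)
  case Nil
  then show ?case using lam by simp
next
  case (Cons u us)
  obtain i \<Delta> where u: "u = (i, \<Delta>)" by fastforce
  let ?U = "update k l (i, \<Delta>) (T, c)"
  define f where "f = (\<lambda>(s1, t1). map_pmf (\<lambda>(s2, t2). (s2, t1 + t2)) (run k l us s1))"
  define g where "g = (\<lambda>((T1::nat set, c1::nat \<Rightarrow> real), t::nat).
      exp (lam * (real t + 8 * real (card T1))) * exp (lam * a * real (length us)))"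
  have inv: "finite T1 \<and> card T1 \<le> k \<and> card T1 + length us \<le> N"
    if "((T1, c1), t) \<in> set_pmf ?U" for T1 c1 t
    using card_update_le[OF Cons.prems(1,2) k l that] Cons.prems(3) by auto
  have "measure_pmf.expectation (run k l (u # us) (T, c)) (\<lambda>(s, t). exp (lam * real t))
      = measure_pmf.expectation (bind_pmf ?U f) (\<lambda>(s, t). exp (lam * real t))"
    unfolding u f_def by simp
  also have "\<dots> \<le> measure_pmf.expectation ?U g"
  proof (rule expectation_bind_pmf_le)
    show "finite (set_pmf ?U)" using finite_set_pmf_update[OF Cons.prems(1,2) k] .
  next
    fix x assume x: "x \<in> set_pmf ?U"
    obtain T1 c1 t where x_eq: "x = ((T1, c1), t)" by (metis prod.collapse)
    show "finite (set_pmf (f x))"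
      using finite_set_pmf_run[OF k l] inv[of T1 c1 t] x unfolding x_eq f_def by auto
    have "measure_pmf.expectation (f x) (\<lambda>(s, t). exp (lam * real t))
        = exp (lam * real t) * measure_pmf.expectation (run k l us (T1, c1)) (\<lambda>(s, t). exp (lam * real t))"
      unfolding x_eq f_def
      by (simp add: case_prod_beta distrib_left exp_add flip: integral_mult_right_zero)
    also have "\<dots> \<le> exp (lam * real t) * exp (lam * (a * real (length us) + 8 * real (card T1)))"
      using Cons.IH inv[of T1 c1 t] x unfolding x_eq by (intro mult_left_mono) auto
    also have "\<dots> = g x"
      unfolding x_eq g_def by (simp add: algebra_simps flip: exp_add)
    finally show "measure_pmf.expectation (f x) (\<lambda>(s, t). exp (lam * real t)) \<le> g x" .
  qed
  also have "\<dots> = measure_pmf.expectation ?U (\<lambda>((T1, c1), t). exp (lam * (real t + 8 * real (card T1))))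
      * exp (lam * a * real (length us))"
    unfolding g_def case_prod_beta by (rule integral_mult_left_zero)
  also have "\<dots> \<le> exp (lam * (a + 8 * real (card T))) * exp (lam * a * real (length us))"
    using Cons.prems(3)
    by (intro mult_right_mono expectation_exp_potential_update[OF Cons.prems(1,2) l lk lam a] rate)
      auto
  also have "\<dots> = exp (lam * (a * real (length (u # us)) + 8 * real (card T)))"
    by (simp add: algebra_simps flip: exp_add)
  finally show ?case .
qed

lemma prob_total_cost_gt:
  fixes lam a s :: real
  assumes k: "1 \<le> k" and l: "1 \<le> l" and lk: "l \<le> k" and lam: "0 \<le> lam" and a: "9 \<le> a"
    and rate: "k \<le> length xs \<Longrightarrow> admissible_rate lam k l a"
  shows "measure_pmf.prob (total_cost k l xs) {t. a * real (length xs) + s < real t}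
           \<le> exp (- lam * s)"
proof -
  let ?R = "run k l xs ({}, \<lambda>_. 0)"
  have fin: "finite (set_pmf ?R)" using finite_set_pmf_run[OF k l] by simp
  have E: "measure_pmf.expectation ?R (\<lambda>(s, t). exp (lam * real t))
      \<le> exp (lam * (a * real (length xs)))"
    using expectation_exp_run_cost[OF k l lk lam a, where N = "length xs" and T = "{}" and xs = xs]
      rate by simp
  have "measure_pmf.prob (total_cost k l xs) {t. a * real (length xs) + s < real t}
      = measure_pmf.prob ?R {x. a * real (length xs) + s < real (snd x)}"
    unfolding total_cost_def by (simp add: vimage_def)
  also have "\<dots> \<le> measure_pmf.expectation ?R (\<lambda>(s, t). exp (lam * real t))
                   / exp (lam * (a * real (length xs) + s))"
    using fin lam by (intro finite_pmf_Markov_inequality) (auto simp: case_prod_beta intro!: mult_left_mono)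
  also have "\<dots> \<le> exp (lam * (a * real (length xs))) / exp (lam * (a * real (length xs) + s))"
    using E by (intro divide_right_mono) auto
  also have "\<dots> = exp (- lam * s)"
    by (simp add: algebra_simps flip: exp_diff)
  finally show ?thesis .
qed

subsection \<open>Choice of the parameters\<close>

lemma exp_1_32_le: "exp (1/32::real) \<le> 16/15"
proof -
  have "exp (1/32::real) \<le> 1 + 1/32 + (1/32)\<^sup>2" by (rule exp_bound) auto
  then show ?thesis by (simp add: power2_eq_square)
qed

lemma admissible_rate_73:
  assumes l: "1 \<le> l" and lk: "l \<le> k" and small: "(14/15::real) ^ l \<le> real l / real k"
  defines "lam \<equiv> real l / (64 * real k)"
  shows "admissible_rate lam k l 73"
proof -
  have "lam * (real k + real l) \<le> lam * (2 * real k)"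
    using lk unfolding lam_def by (intro mult_left_mono) auto
  also have "\<dots> = real l / 32" using l lk unfolding lam_def by (simp add: field_simps)
  finally have "exp (lam * (9 + real k + real l)) \<le> exp (lam * 9) * exp (1/32) ^ l"
    by (simp add: algebra_simps flip: exp_add exp_of_nat_mult)
  then have "(7/8) ^ l * exp (lam * (9 + real k + real l)) \<le> (7/8) ^ l * (exp (lam * 9) * exp (1/32) ^ l)"
    by (intro mult_left_mono) auto
  also have "\<dots> = exp (lam * 9) * ((7/8) * exp (1/32)) ^ l"
    by (simp only: power_mult_distrib mult_ac)
  also have "\<dots> \<le> exp (lam * 9) * (14/15) ^ l"
    using exp_1_32_le by (intro mult_left_mono power_mono) auto
  also have "\<dots> \<le> exp (lam * 9) * (64 * lam)"
    using small l lk unfolding lam_def by (intro mult_left_mono) (auto simp: field_simps)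
  finally have "exp (lam * 9) + (7/8) ^ l * exp (lam * (9 + real k + real l))
      \<le> exp (lam * 9) * (1 + 64 * lam)"
    by (simp add: algebra_simps)
  also have "\<dots> \<le> exp (lam * 9) * exp (64 * lam)"
    by (intro mult_left_mono) auto
  finally show ?thesis
    unfolding admissible_rate_def by (simp add: mult.commute flip: exp_add)
qed

lemma power_14_15_le_inverse:
  assumes n: "1 \<le> n" and L: "15 * ln (real n) \<le> real L"
  shows "(14/15::real) ^ L \<le> 1 / real n"
proof -
  have "ln (14/15::real) \<le> 14/15 - 1" by (rule ln_le_minus_one) auto
  then have "real L * ln (14/15) \<le> real L * (-1/15)" by (intro mult_left_mono) auto
  then have "real L * ln (14/15) \<le> - ln (real n)" using L by linarith
  moreover have "(14/15::real) ^ L = exp (real L * ln (14/15))"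
    by (simp add: exp_of_nat_mult)
  ultimately have "(14/15::real) ^ L \<le> exp (- ln (real n))" by simp
  also have "\<dots> = 1 / real n" using n by (simp add: exp_minus inverse_eq_divide)
  finally show ?thesis .
qed

definition sample_size :: "nat \<Rightarrow> nat \<Rightarrow> nat" where
  "sample_size n k = max 1 (min k (nat \<lceil>15 * (ln (real n) + 1)\<rceil>))"

lemma real_sample_size_ceiling:
  "real (nat \<lceil>15 * (ln (real n) + 1)\<rceil>) = of_int \<lceil>15 * (ln (real n) + 1)\<rceil>"
proof -
  have "0 \<le> ln (real n)" by (cases n) auto
  then show ?thesis by simp
qed

lemma sample_size_le_ln: "real (sample_size n k) \<le> 16 * (ln (real n) + 1)"
proof -
  have "0 \<le> ln (real n)" by (cases n) auto
  moreover have "real (nat \<lceil>15 * (ln (real n) + 1)\<rceil>) \<le> 15 * (ln (real n) + 1) + 1"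
    unfolding real_sample_size_ceiling by (rule of_int_ceiling_le_add_one)
  ultimately show ?thesis
    unfolding sample_size_def by (simp add: of_nat_max of_nat_min)
qed

lemma sample_size_le_or_ge_ln:
  assumes k: "1 \<le> k"
  shows "1 \<le> sample_size n k" "sample_size n k \<le> k"
    and "sample_size n k = k \<or> 15 * ln (real n) + 15 \<le> real (sample_size n k)"
proof -
  define L where "L = nat \<lceil>15 * (ln (real n) + 1)\<rceil>"
  have ln: "0 \<le> ln (real n)" by (cases n) auto
  have L: "15 * ln (real n) + 15 \<le> real L"
    unfolding L_def real_sample_size_ceiling using le_of_int_ceiling by simp
  have "1 \<le> L"
  proof (rule ccontr)
    assume "\<not> 1 \<le> L"
    then show False using L ln by simp
  qed
  then have "sample_size n k = min k L"
    using k unfolding sample_size_def L_def by (simp add: max_def)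
  then show "1 \<le> sample_size n k" "sample_size n k \<le> k"
    using k \<open>1 \<le> L\<close> by simp_all
  show "sample_size n k = k \<or> 15 * ln (real n) + 15 \<le> real (sample_size n k)"
    using L \<open>sample_size n k = min k L\<close> by (auto simp: min_def)
qed

text \<open>For \<open>k \<le> n\<close> the rate is \<open>\<lambda> = l/(64 k)\<close>; for \<open>k > n\<close> the table never fills and the
  rate \<open>l/(64 n)\<close> need not be admissible.\<close>

lemma total_cost_tail:
  assumes k: "1 \<le> k" and n: "1 \<le> n" and len: "length xs = n"
  shows "measure_pmf.prob (total_cost k (sample_size n k) xs) {t. 137 * real n < real t} \<le> 1 / real n"
proof -
  define l where "l = sample_size n k"
  define lam where "lam = real l / (64 * real (min k n))"
  note l = sample_size_le_or_ge_ln[OF k, of n, folded l_def]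
  have ln_n: "ln (real n) \<le> real n" using ln_le_minus_one[of "real n"] n by simp
  have rate: "admissible_rate lam k l 73" if kn: "k \<le> n"
  proof -
    have "(14/15::real) ^ l \<le> real l / real k"
      using l(3)
    proof
      assume "15 * ln (real n) + 15 \<le> real l"
      then have "(14/15::real) ^ l \<le> 1 / real n" by (intro power_14_15_le_inverse n) auto
      also have "\<dots> \<le> real l / real k" using kn k l(1) by (simp add: frac_le)
      finally show ?thesis .
    qed (use k in \<open>simp add: power_le_one\<close>)
    then show ?thesis
      using admissible_rate_73[OF l(1,2)] kn unfolding lam_def by (simp add: min_def)
  qed
  have ln_le: "ln (real n) \<le> 64 * lam * real n"
  proof -
    have "real (min k n) \<le> real n" by simp
    then have "real l \<le> 64 * lam * real n"
      using k n unfolding lam_def by (simp add: field_simps mult_left_mono)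
    moreover have "ln (real n) \<le> real l \<or> l = k"
      using l(3) ln_ge_zero[of "real n"] n by auto
    moreover have "ln (real n) \<le> 64 * lam * real n" if "l = k"
    proof -
      have "real n \<le> 64 * lam * real n" using that k n unfolding lam_def by (simp add: field_simps)
      then show ?thesis using ln_n by linarith
    qed
    ultimately show ?thesis by linarith
  qed
  have "measure_pmf.prob (total_cost k l xs) {t. 73 * real (length xs) + 64 * real n < real t}
      \<le> exp (- lam * (64 * real n))"
    using rate len k unfolding lam_def by (intro prob_total_cost_gt l(1,2)) auto
  also have "\<dots> \<le> exp (- ln (real n))" using ln_le by simp
  also have "\<dots> = 1 / real n" using n by (simp add: exp_minus inverse_eq_divide)
  finally show ?thesis using len unfolding l_def by simp
qed

text \<open>The cost model does not depend on the items or weights.\<close>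

theorem theorem7:
  shows "\<exists>(l :: nat \<Rightarrow> nat \<Rightarrow> nat) (c :: real) (C :: real).
     (\<forall>n k. 1 \<le> l n k \<and> real (l n k) \<le> c * (ln (real n) + 1)) \<and>
     (\<forall>(n :: nat) (k :: nat) (m :: nat) (xs :: (nat \<times> real) list).
        1 \<le> k \<longrightarrow> 1 \<le> n \<longrightarrow> length xs = n \<longrightarrow>
        (\<forall>(i, \<Delta>) \<in> set xs. i \<in> {1..m} \<and> \<Delta> > 0) \<longrightarrow>
        measure_pmf.prob (total_cost k (l n k) xs) {t. real t \<le> C * real n}
          \<ge> 1 - 1 / real n)"
proof (intro exI conjI allI impI)
  fix n k :: nat
  show "1 \<le> sample_size n k" unfolding sample_size_def by simp
  show "real (sample_size n k) \<le> 16 * (ln (real n) + 1)"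
    by (rule sample_size_le_ln)
next
  fix n k m :: nat and xs :: "(nat \<times> real) list"
  assume "1 \<le> k" "1 \<le> n" "length xs = n"
  then have "measure_pmf.prob (total_cost k (sample_size n k) xs) {t. \<not> real t \<le> 137 * real n}
      \<le> 1 / real n"
    using total_cost_tail by (simp add: not_le)
  then show "1 - 1 / real n
      \<le> measure_pmf.prob (total_cost k (sample_size n k) xs) {t. real t \<le> 137 * real n}"
    using measure_pmf.prob_compl[of "{t. real t \<le> 137 * real n}" "total_cost k (sample_size n k) xs"]
    by (simp add: set_diff_eq)
qed

end
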